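(* For all integers $n\ge2$ and $k\ge1$: (a) the eccentricity of the root $\mathbf r=00\ldots0$ in $H_{n,k}$ equals $k$, and the radius of $H_{n,k}$ equals $k$; (b) the diameter of $H_{n,k}$ equals $2k-1$.
   Context: Let $n\ge 2$ and $k\ge 1$ be integers. $H_{n,k}$ is the simple undirected graph with vertex set $V_{n,k}=\mathbb{Z}_n^k$ (so $|V_{n,k}|=n^k$), whose vertices are written as strings $x_1x_2\ldots x_k$ with $x_j\in\mathbb{Z}_n=\{0,1,\ldots,n-1\}$. Two distinct vertices are adjacent if and only if they are related by one of the following rules. For $i=0$ the prefix $x_1\ldots x_i$ is empty, and "$0\ldots0$" denotes a string of zeros completing the word to length $k$. (R1) $x_1\ldots x_{k-1}x_k\sim x_1\ldots x_{k-1}y_k$ whenever $y_k\neq x_k$. (R2) For $0\le i\le k-2$: $x_1\ldots x_i0\ldots0\sim x_1\ldots x_ix_{i+1}\ldots x_k$ whenever $x_j\neq 0$ for all $i+1\le j\le k$. (R3) For $1\le i\le k-1$: $x_1\ldots x_{i-1}x_i0\ldots0\sim x_1\ldots x_{i-1}y_i0\ldots0$ whenever $x_i,y_i\neq0$ and $x_i\ne y_i$. In particular, $H_{n,1}$ is the complete graph $K_n$. The root of $H_{n,k}$ is the vertex $\mathbf r=00\ldots0$. The eccentricity of a vertex is its maximum distance to the other vertices; the radius (resp. diameter) is the minimum (resp. maximum) eccentricity. *)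

theory Defs
  imports Main "HOL-Library.Extended_Nat"
begin

definition Hverts :: "nat \<Rightarrow> nat \<Rightarrow> nat list set" where
  "Hverts n k = {xs. length xs = k \<and> (\<forall>x\<in>set xs. x < n)}"

definition R1 :: "nat \<Rightarrow> nat list \<Rightarrow> nat list \<Rightarrow> bool" where
  "R1 k x y \<longleftrightarrow> take (k - 1) x = take (k - 1) y \<and> last x \<noteq> last y"

definition R2 :: "nat \<Rightarrow> nat list \<Rightarrow> nat list \<Rightarrow> bool" where
  "R2 k x y \<longleftrightarrow> (\<exists>i. i + 2 \<le> k \<and> x = take i y @ replicate (k - i) 0
                       \<and> (\<forall>j. i \<le> j \<and> j < k \<longrightarrow> y ! j \<noteq> 0))"

text \<open>(R3): for 1 <= i <= k-1, x_1..x_{i-1} a 0..0 ~ x_1..x_{i-1} b 0..0 with a, b nonzero, a <> b.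
  Here p = x_1..x_{i-1}, so length p = i - 1.\<close>
definition R3 :: "nat \<Rightarrow> nat list \<Rightarrow> nat list \<Rightarrow> bool" where
  "R3 k x y \<longleftrightarrow> (\<exists>i p a b. 1 \<le> i \<and> i \<le> k - 1 \<and> length p = i - 1
       \<and> a \<noteq> 0 \<and> b \<noteq> 0 \<and> a \<noteq> b
       \<and> x = p @ [a] @ replicate (k - i) 0 \<and> y = p @ [b] @ replicate (k - i) 0)"

definition Hadj :: "nat \<Rightarrow> nat \<Rightarrow> nat list \<Rightarrow> nat list \<Rightarrow> bool" where
  "Hadj n k x y \<longleftrightarrow> x \<in> Hverts n k \<and> y \<in> Hverts n k \<and> x \<noteq> y \<and>
     (R1 k x y \<or> R2 k x y \<or> R2 k y x \<or> R3 k x y)"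

text \<open>Graph distance (infinity if no walk exists).\<close>
definition Hdist :: "nat \<Rightarrow> nat \<Rightarrow> nat list \<Rightarrow> nat list \<Rightarrow> enat" where
  "Hdist n k u v = (INF d \<in> {d. (Hadj n k ^^ d) u v}. enat d)"

definition Hecc :: "nat \<Rightarrow> nat \<Rightarrow> nat list \<Rightarrow> enat" where
  "Hecc n k u = (SUP v \<in> Hverts n k. Hdist n k u v)"

definition Hradius :: "nat \<Rightarrow> nat \<Rightarrow> enat" where
  "Hradius n k = (INF u \<in> Hverts n k. Hecc n k u)"

definition Hdiam :: "nat \<Rightarrow> nat \<Rightarrow> enat" where
  "Hdiam n k = (SUP u \<in> Hverts n k. Hecc n k u)"

definition Hroot :: "nat \<Rightarrow> nat list" where
  "Hroot k = replicate k 0"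

end

theory Submission
  imports Defs
begin

text \<open>
  The upper bounds are proved by induction on \<open>k\<close>: prefixing a fixed letter embeds
  \<open>H(n,k)\<close> into \<open>H(n,k+1)\<close>, the root is adjacent to every word without zeros, and words with
  distinct nonzero first letters are connected through the (R3) edge between \<open>a0\<dots>0\<close> and
  \<open>b0\<dots>0\<close>.

  For the lower bounds, precede a word by an imaginary \<open>0\<close> and call position \<open>i\<close> a boundary
  if \<open>x\<^sub>i\<close> and its left neighbour differ in being zero. An edge changes at most one of the
  \<open>k\<close> boundary indicators, so the number of positions where the indicators of two words differ
  bounds their distance from below; this gives eccentricity at least \<open>k\<close> everywhere. An edge
  can turn a zero first letter into a nonzero one only at the root, which has no boundaries.
  Hence the number of boundaries, negated when the first letter is zero, also changes by at most
  one along an edge; it is \<open>1 - k\<close> at \<open>0101\<dots>\<close> and \<open>k\<close> at \<open>1010\<dots>\<close>.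
\<close>

lemma relpowp_sym:
  assumes "symp R" and "(R ^^ d) x y"
  shows "(R ^^ d) y x"
  using assms(2)
proof (induction d arbitrary: y)
  case 0
  then show ?case by simp
next
  case (Suc d)
  then obtain z where "(R ^^ d) x z" "R z y" by (auto elim: relpowp_Suc_E)
  with Suc.IH assms(1) show ?case by (meson relpowp_Suc_I2 sympD)
qed

lemma relpowp_increment_bound:
  fixes f :: "'a \<Rightarrow> int"
  assumes "\<And>x y. R x y \<Longrightarrow> f y \<le> f x + 1" and "(R ^^ d) u v"
  shows "f v \<le> f u + int d"
  using assms(2)
proof (induction d arbitrary: v)
  case 0
  then show ?case by simp
next
  case (Suc d)
  then obtain z where "(R ^^ d) u z" "R z v" by (auto elim: relpowp_Suc_E)
  with Suc.IH assms(1) show ?case by fastforce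
qed

lemma Hverts_length: "x \<in> Hverts n k \<Longrightarrow> length x = k"
  unfolding Hverts_def by auto

lemma Cons_in_Hverts_iff: "c # v \<in> Hverts n (Suc m) \<longleftrightarrow> c < n \<and> v \<in> Hverts n m"
  unfolding Hverts_def by auto

lemma replicate_in_Hverts: "a < n \<Longrightarrow> replicate m a \<in> Hverts n m"
  unfolding Hverts_def by auto

lemma Hverts_SucE:
  assumes "v \<in> Hverts n (Suc m)"
  obtains c v' where "v = c # v'" "c < n" "v' \<in> Hverts n m"
  using assms unfolding Hverts_def by (cases v) auto

lemma symp_Hadj: "symp (Hadj n k)"
  unfolding symp_def Hadj_def R1_def R3_def by metis

lemma Hadj_one: "a < n \<Longrightarrow> b < n \<Longrightarrow> a \<noteq> b \<Longrightarrow> Hadj n 1 [a] [b]"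
  unfolding Hadj_def R1_def Hverts_def by auto

lemma Hadj_root_nonzero:
  assumes "2 \<le> k" and "w \<in> Hverts n k" and "0 \<notin> set w"
  shows "Hadj n k (replicate k 0) w"
proof -
  have len: "length w = k" using assms(2) by (rule Hverts_length)
  then obtain c where "c \<in> set w" using assms(1) by (cases w) auto
  then have "replicate k 0 \<in> Hverts n k"
    using assms(2) by (intro replicate_in_Hverts) (auto simp: Hverts_def)
  moreover have "w \<noteq> replicate k 0" using assms(1,3) len by (cases w) auto
  moreover have "R2 k (replicate k 0) w"
    unfolding R2_def using assms(1,3) len by (intro exI[of _ 0]) (auto simp: in_set_conv_nth)
  ultimately show ?thesis unfolding Hadj_def using assms(2) by blast
qed

lemma Hadj_Cons:
  assumes "Hadj n m x y" and "m \<ge> 1" and "c < n"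
  shows "Hadj n (Suc m) (c # x) (c # y)"
proof -
  have len: "length x = m" "length y = m" using assms(1) unfolding Hadj_def Hverts_def by auto
  have "R1 (Suc m) (c # x) (c # y)" if "R1 m x y"
    using that assms(2) len unfolding R1_def by (cases m) auto
  moreover have "R2 (Suc m) (c # x) (c # y)" if "R2 m x y" for x y :: "nat list"
  proof -
    from that obtain i where i: "i + 2 \<le> m" "x = take i y @ replicate (m - i) 0"
      "\<forall>j. i \<le> j \<and> j < m \<longrightarrow> y ! j \<noteq> 0" unfolding R2_def by blast
    show ?thesis unfolding R2_def
    proof (intro exI[of _ "Suc i"] conjI allI impI)
      fix j assume "Suc i \<le> j \<and> j < Suc m"
      then show "(c # y) ! j \<noteq> 0" using i(3) by (cases j) auto
    qed (use i in simp_all)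
  qed
  moreover have "R3 (Suc m) (c # x) (c # y)" if "R3 m x y"
  proof -
    from that obtain i p a b where "1 \<le> i" "i \<le> m - 1" "length p = i - 1"
      "a \<noteq> 0" "b \<noteq> 0" "a \<noteq> b" "x = p @ [a] @ replicate (m - i) 0"
      "y = p @ [b] @ replicate (m - i) 0"
      unfolding R3_def by blast
    then show ?thesis unfolding R3_def by (intro exI[of _ "Suc i"] exI[of _ "c # p"] exI[of _ a] exI[of _ b]) auto
  qed
  ultimately show ?thesis using assms unfolding Hadj_def by (auto simp: Cons_in_Hverts_iff)
qed

lemma relpowp_Hadj_Cons:
  assumes "(Hadj n m ^^ d) x y" and "m \<ge> 1" and "c < n"
  shows "(Hadj n (Suc m) ^^ d) (c # x) (c # y)"
  using assms(1)
proof (induction d arbitrary: y)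
  case 0
  then show ?case by simp
next
  case (Suc d)
  then obtain z where "(Hadj n m ^^ d) x z" "Hadj n m z y" by (auto elim: relpowp_Suc_E)
  with Suc.IH Hadj_Cons[OF _ assms(2,3)] show ?case by (meson relpowp_Suc_I)
qed

definition walk_within :: "nat \<Rightarrow> nat \<Rightarrow> nat \<Rightarrow> nat list \<Rightarrow> nat list \<Rightarrow> bool" where
  "walk_within n k d u v \<longleftrightarrow> (\<exists>d'\<le>d. (Hadj n k ^^ d') u v)"

lemma walk_within_refl: "walk_within n k d u u"
  unfolding walk_within_def by auto

lemma walk_within_mono: "walk_within n k d u v \<Longrightarrow> d \<le> d' \<Longrightarrow> walk_within n k d' u v"
  unfolding walk_within_def by (meson order_trans)

lemma walk_within_trans:
  "walk_within n k d\<^sub>1 u v \<Longrightarrow> walk_within n k d\<^sub>2 v w \<Longrightarrow> walk_within n k (d\<^sub>1 + d\<^sub>2) u w"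
  unfolding walk_within_def by (meson add_mono relpowp_trans)

lemma walk_within_edge: "Hadj n k u v \<Longrightarrow> walk_within n k 1 u v"
  unfolding walk_within_def by (metis relpowp_1 order_refl)

lemma walk_within_sym: "walk_within n k d u v \<Longrightarrow> walk_within n k d v u"
  unfolding walk_within_def using relpowp_sym[OF symp_Hadj] by blast

lemma walk_within_Cons:
  "walk_within n m d x y \<Longrightarrow> m \<ge> 1 \<Longrightarrow> c < n \<Longrightarrow> walk_within n (Suc m) d (c # x) (c # y)"
  unfolding walk_within_def using relpowp_Hadj_Cons by blast

lemma walk_within_one:
  assumes "u \<in> Hverts n 1" and "v \<in> Hverts n 1"
  shows "walk_within n 1 1 u v"
proof -
  obtain a b where "u = [a]" "v = [b]" "a < n" "b < n"
    using assms by (metis Hverts_SucE One_nat_def Hverts_length length_0_conv)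
  with walk_within_edge[OF Hadj_one[of a n b]] show ?thesis
    by (cases "a = b") (auto simp: walk_within_refl)
qed

lemma Hdist_le_if_walk_within: "walk_within n k d u v \<Longrightarrow> Hdist n k u v \<le> enat d"
proof -
  assume "walk_within n k d u v"
  then obtain d' where "d' \<le> d" "(Hadj n k ^^ d') u v" unfolding walk_within_def by blast
  then have "Hdist n k u v \<le> enat d'" unfolding Hdist_def by (intro INF_lower2[of d']) auto
  with \<open>d' \<le> d\<close> show ?thesis by (meson enat_ord_simps(1) order_trans)
qed

lemma Hdist_ge_if_walks_long:
  "(\<And>d. (Hadj n k ^^ d) u v \<Longrightarrow> m \<le> d) \<Longrightarrow> enat m \<le> Hdist n k u v"
  unfolding Hdist_def by (rule INF_greatest) auto

subsection \<open>Upper bounds\<close>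

lemma walk_within_from_root_Suc:
  assumes "m \<ge> 1"
    and root: "\<And>v. v \<in> Hverts n m \<Longrightarrow> walk_within n m m (replicate m 0) v"
    and nonzero: "\<And>v. v \<in> Hverts n m \<Longrightarrow> \<exists>w\<in>Hverts n m. 0 \<notin> set w \<and> walk_within n m m w v"
    and "v \<in> Hverts n (Suc m)"
  shows "walk_within n (Suc m) (Suc m) (replicate (Suc m) 0) v"
proof -
  obtain c v' where v: "v = c # v'" "c < n" "v' \<in> Hverts n m"
    using assms(4) by (rule Hverts_SucE)
  show ?thesis
  proof (cases "c = 0")
    case True
    with walk_within_Cons[OF root[OF v(3)] assms(1) v(2)] v show ?thesis
      by (auto elim: walk_within_mono)
  next
    case False
    obtain w where w: "w \<in> Hverts n m" "0 \<notin> set w" "walk_within n m m w v'"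
      using nonzero[OF v(3)] by blast
    have "Hadj n (Suc m) (replicate (Suc m) 0) (c # w)"
      using assms(1) v(2) False w(1,2) by (intro Hadj_root_nonzero) (auto simp: Cons_in_Hverts_iff)
    moreover have "walk_within n (Suc m) m (c # w) (c # v')"
      using w(3) assms(1) v(2) by (rule walk_within_Cons)
    ultimately have "walk_within n (Suc m) (1 + m) (replicate (Suc m) 0) (c # v')"
      by (blast intro: walk_within_trans walk_within_edge)
    with v show ?thesis by simp
  qed
qed

lemma walk_within_from_nonzero_Suc:
  assumes "n \<ge> 2" and "m \<ge> 1"
    and root: "\<And>v. v \<in> Hverts n m \<Longrightarrow> walk_within n m m (replicate m 0) v"
    and nonzero: "\<And>v. v \<in> Hverts n m \<Longrightarrow> \<exists>w\<in>Hverts n m. 0 \<notin> set w \<and> walk_within n m m w v"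
    and "u \<in> Hverts n (Suc m)"
  shows "\<exists>w\<in>Hverts n (Suc m). 0 \<notin> set w \<and> walk_within n (Suc m) (Suc m) w u"
proof -
  obtain c u' where u: "u = c # u'" "c < n" "u' \<in> Hverts n m"
    using assms(5) by (rule Hverts_SucE)
  show ?thesis
  proof (cases "c = 0")
    case False
    obtain w where w: "w \<in> Hverts n m" "0 \<notin> set w" "walk_within n m m w u'"
      using nonzero[OF u(3)] by blast
    have "walk_within n (Suc m) (Suc m) (c # w) (c # u')"
      using walk_within_mono[OF walk_within_Cons[OF w(3) assms(2) u(2)]] by simp
    with w u False show ?thesis by (intro bexI[of _ "c # w"]) (auto simp: Cons_in_Hverts_iff)
  next
    case True
    have ones: "replicate (Suc m) 1 \<in> Hverts n (Suc m)"
      using assms(1) by (intro replicate_in_Hverts) simp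
    with assms(2) have "Hadj n (Suc m) (replicate (Suc m) 0) (replicate (Suc m) 1)"
      by (intro Hadj_root_nonzero) auto
    then have "walk_within n (Suc m) 1 (replicate (Suc m) 1) (replicate (Suc m) 0)"
      by (rule walk_within_sym[OF walk_within_edge])
    moreover have "walk_within n (Suc m) m (replicate (Suc m) 0) u"
      using walk_within_Cons[OF root[OF u(3)] assms(2) u(2)] u True by simp
    ultimately have "walk_within n (Suc m) (1 + m) (replicate (Suc m) 1) u"
      by (rule walk_within_trans)
    with ones show ?thesis by (intro bexI[of _ "replicate (Suc m) 1"]) auto
  qed
qed

lemma walk_within_root_and_nonzero:
  assumes "n \<ge> 2" and "k \<ge> 1"
  shows "(\<forall>v\<in>Hverts n k. walk_within n k k (replicate k 0) v) \<and>
         (\<forall>u\<in>Hverts n k. \<exists>w\<in>Hverts n k. 0 \<notin> set w \<and> walk_within n k k w u)"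
  using assms(2)
proof (induction k rule: dec_induct)
  case base
  have "[0] \<in> Hverts n 1" "[1] \<in> Hverts n 1" "replicate 1 0 = [0::nat]" "0 \<notin> set [1::nat]"
    using assms by (auto simp: Hverts_def)
  then show ?case by (metis walk_within_one)
next
  case (step m)
  then show ?case
    using walk_within_from_root_Suc walk_within_from_nonzero_Suc[OF assms(1)] by blast
qed

lemma walk_within_from_root:
  assumes "n \<ge> 2" and "k \<ge> 1" and "v \<in> Hverts n k"
  shows "walk_within n k k (replicate k 0) v"
  using walk_within_root_and_nonzero[OF assms(1,2)] assms(3) by blast

lemma walk_within_from_nonzero:
  assumes "n \<ge> 2" and "k \<ge> 1" and "u \<in> Hverts n k"
  obtains w where "w \<in> Hverts n k" "0 \<notin> set w" "walk_within n k k w u"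
  using walk_within_root_and_nonzero[OF assms(1,2)] assms(3) by blast

lemma walk_within_through_root:
  assumes "n \<ge> 2" and "m \<ge> 1" and "u \<in> Hverts n m" "v \<in> Hverts n m"
    and "b < n" "b \<noteq> 0"
  shows "walk_within n (Suc m) (m + 1 + m) (0 # u) (b # v)"
proof -
  have n0: "0 < n" using assms(1) by simp
  obtain w where w: "w \<in> Hverts n m" "0 \<notin> set w" "walk_within n m m w v"
    using walk_within_from_nonzero[OF assms(1,2,4)] .
  have "walk_within n (Suc m) m (0 # u) (0 # replicate m 0)"
    using walk_within_sym[OF walk_within_from_root[OF assms(1-3)]] assms(2) n0
    by (rule walk_within_Cons)
  moreover have "Hadj n (Suc m) (replicate (Suc m) 0) (b # w)"
    using assms w by (intro Hadj_root_nonzero) (auto simp: Cons_in_Hverts_iff)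
  moreover have "walk_within n (Suc m) m (b # w) (b # v)"
    using w(3) assms(2,5) by (rule walk_within_Cons)
  ultimately show ?thesis
    by (metis walk_within_trans walk_within_edge replicate_Suc)
qed

lemma walk_within_through_R3_edge:
  assumes "n \<ge> 2" and "m \<ge> 1" and "u \<in> Hverts n m" "v \<in> Hverts n m"
    and "a < n" "b < n" "a \<noteq> 0" "b \<noteq> 0" "a \<noteq> b"
  shows "walk_within n (Suc m) (m + 1 + m) (a # u) (b # v)"
proof -
  have "walk_within n (Suc m) m (a # u) (a # replicate m 0)"
    using walk_within_sym[OF walk_within_from_root[OF assms(1-3)]] assms(2,5)
    by (rule walk_within_Cons)
  moreover have "R3 (Suc m) (a # replicate m 0) (b # replicate m 0)"
    unfolding R3_def using assms(2,7-9)
    by (intro exI[of _ 1] exI[of _ "[]"] exI[of _ a] exI[of _ b]) auto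
  then have "Hadj n (Suc m) (a # replicate m 0) (b # replicate m 0)"
    unfolding Hadj_def using assms(5,6,9) by (auto simp: Cons_in_Hverts_iff replicate_in_Hverts)
  moreover have "walk_within n (Suc m) m (b # replicate m 0) (b # v)"
    using walk_within_from_root[OF assms(1,2,4)] assms(2,6) by (rule walk_within_Cons)
  ultimately show ?thesis by (metis walk_within_trans walk_within_edge)
qed

lemma walk_within_diameter:
  assumes "n \<ge> 2" and "k \<ge> 1" and "u \<in> Hverts n k" "v \<in> Hverts n k"
  shows "walk_within n k (2 * k - 1) u v"
  using assms(2-4)
proof (induction k arbitrary: u v rule: dec_induct)
  case base
  from walk_within_one[OF base] show ?case by simp
next
  case (step m)
  obtain a u' where u: "u = a # u'" "a < n" "u' \<in> Hverts n m"
    using step.prems(1) by (rule Hverts_SucE)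
  obtain b v' where v: "v = b # v'" "b < n" "v' \<in> Hverts n m"
    using step.prems(2) by (rule Hverts_SucE)
  consider "a = b" | "a = 0" "b \<noteq> 0" | "a \<noteq> 0" "b = 0" | "a \<noteq> 0" "b \<noteq> 0" "a \<noteq> b"
    by fastforce
  then have "walk_within n (Suc m) (m + 1 + m) u v"
  proof cases
    case 1
    with walk_within_Cons[OF step.IH[OF u(3) v(3)] step.hyps(1) u(2)] u v
    show ?thesis by (auto elim: walk_within_mono)
  next
    case 2
    with walk_within_through_root[OF assms(1) step.hyps(1) u(3) v(3) v(2)] u v show ?thesis by simp
  next
    case 3
    with walk_within_sym[OF walk_within_through_root[OF assms(1) step.hyps(1) v(3) u(3) u(2)]] u v
    show ?thesis by simp
  next
    case 4
    with walk_within_through_R3_edge[OF assms(1) step.hyps(1) u(3) v(3) u(2) v(2)] u v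
    show ?thesis by simp
  qed
  then show ?case by (simp add: mult_2)
qed

subsection \<open>Lower bounds\<close>

definition zero_boundary :: "nat list \<Rightarrow> nat \<Rightarrow> bool" where
  "zero_boundary x i \<longleftrightarrow> (if i = 0 then x ! 0 \<noteq> 0 else (x ! (i - 1) = 0) \<noteq> (x ! i = 0))"

definition boundary_dist :: "nat \<Rightarrow> nat list \<Rightarrow> nat list \<Rightarrow> nat" where
  "boundary_dist k x y = card {i. i < k \<and> zero_boundary x i \<noteq> zero_boundary y i}"

lemma zero_boundary_eq_if_prefix_eq:
  "\<forall>l<m. x ! l = y ! l \<Longrightarrow> i < m \<Longrightarrow> zero_boundary x i = zero_boundary y i"
  unfolding zero_boundary_def by auto

lemma zero_boundary_eq_if_zeros_eq:
  "\<forall>l<k. (x ! l = 0) = (y ! l = 0) \<Longrightarrow> i < k \<Longrightarrow> zero_boundary x i = zero_boundary y i"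
  unfolding zero_boundary_def by auto

lemma R2_changes_one_boundary:
  assumes "R2 k x y" and "length y = k"
  shows "\<exists>j. \<forall>i<k. i \<noteq> j \<longrightarrow> zero_boundary x i = zero_boundary y i"
proof -
  from assms obtain j where j: "j + 2 \<le> k" "x = take j y @ replicate (k - j) 0"
    "\<forall>l. j \<le> l \<and> l < k \<longrightarrow> y ! l \<noteq> 0" unfolding R2_def by blast
  have prefix: "\<forall>l<j. x ! l = y ! l" using j assms(2) by (auto simp: nth_append)
  have zeros: "x ! l = 0" if "j \<le> l" "l < k" for l
    using j assms(2) that by (auto simp: nth_append)
  have "zero_boundary x i = zero_boundary y i" if "i < k" "i \<noteq> j" for i
  proof (cases "i < j")
    case True
    with prefix show ?thesis by (rule zero_boundary_eq_if_prefix_eq)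
  next
    case False
    with that have "j \<le> i - 1" "i \<noteq> 0" by auto
    with zeros j(3) that show ?thesis unfolding zero_boundary_def by auto
  qed
  then show ?thesis by blast
qed

lemma Hadj_changes_one_boundary:
  assumes "Hadj n k x y"
  shows "\<exists>j. \<forall>i<k. i \<noteq> j \<longrightarrow> zero_boundary x i = zero_boundary y i"
proof -
  have len: "length x = k" "length y = k" using assms unfolding Hadj_def by (auto simp: Hverts_length)
  consider "R1 k x y" | "R2 k x y" | "R2 k y x" | "R3 k x y" using assms unfolding Hadj_def by blast
  then show ?thesis
  proof cases
    case 1
    then have "\<forall>l<k - 1. x ! l = y ! l" unfolding R1_def by (metis nth_take)
    then have "\<forall>i<k. i \<noteq> k - 1 \<longrightarrow> zero_boundary x i = zero_boundary y i"
      using zero_boundary_eq_if_prefix_eq[of "k - 1" x y] by auto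
    then show ?thesis by blast
  next
    case 2
    with len show ?thesis by (blast dest: R2_changes_one_boundary)
  next
    case 3
    with len show ?thesis by (metis R2_changes_one_boundary)
  next
    case 4
    then obtain i p a b where "a \<noteq> 0" "b \<noteq> 0"
      "x = p @ [a] @ replicate (k - i) 0" "y = p @ [b] @ replicate (k - i) 0"
      unfolding R3_def by blast
    then have "(x ! l = 0) = (y ! l = 0)" for l
      by (cases "l < length p"; cases "l = length p") (auto simp: nth_append)
    then show ?thesis using zero_boundary_eq_if_zeros_eq by blast
  qed
qed

lemma boundary_dist_Hadj:
  assumes "Hadj n k x y"
  shows "boundary_dist k u y \<le> boundary_dist k u x + 1"
proof -
  obtain j where j: "\<forall>i<k. i \<noteq> j \<longrightarrow> zero_boundary x i = zero_boundary y i"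
    using Hadj_changes_one_boundary[OF assms] by blast
  let ?D = "\<lambda>z. {i. i < k \<and> zero_boundary u i \<noteq> zero_boundary z i}"
  have "?D y \<subseteq> insert j (?D x)" using j by auto
  then have "card (?D y) \<le> card (insert j (?D x))" by (rule card_mono[rotated]) auto
  also have "\<dots> \<le> card (?D x) + 1" by (simp add: card_insert_if)
  finally show ?thesis unfolding boundary_dist_def .
qed

lemma boundary_dist_self: "boundary_dist k u u = 0"
  unfolding boundary_dist_def by simp

lemma Hecc_ge:
  assumes "n \<ge> 2" and "u \<in> Hverts n k"
  shows "enat k \<le> Hecc n k u"
proof -
  define v where "v = map (\<lambda>j. if (u ! j = 0) \<noteq> even j then 0 else (1::nat)) [0..<k]"
  have v: "v \<in> Hverts n k" using assms(1) unfolding v_def Hverts_def by auto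
  have v_zero: "(v ! j = 0) = ((u ! j = 0) \<noteq> even j)" if "j < k" for j
    using that unfolding v_def by auto
  \<comment> \<open>flipping the zero pattern at every second position moves every boundary\<close>
  have "zero_boundary u i \<noteq> zero_boundary v i" if "i < k" for i
  proof (cases "i = 0")
    case True
    with v_zero[OF that] show ?thesis unfolding zero_boundary_def by auto
  next
    case False
    with that have "i - 1 < k" "even (i - 1) \<longleftrightarrow> odd i" by auto
    with False v_zero[OF that] v_zero[of "i - 1"] show ?thesis unfolding zero_boundary_def by auto
  qed
  then have "{i. i < k \<and> zero_boundary u i \<noteq> zero_boundary v i} = {..<k}" by auto
  then have dist_uv: "boundary_dist k u v = k" unfolding boundary_dist_def by simp
  have step: "int (boundary_dist k u y) \<le> int (boundary_dist k u x) + 1" if "Hadj n k x y" for x y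
    using boundary_dist_Hadj[OF that, of u] by linarith
  have "enat k \<le> Hdist n k u v"
  proof (rule Hdist_ge_if_walks_long)
    fix d assume "(Hadj n k ^^ d) u v"
    from relpowp_increment_bound[where f = "\<lambda>x. int (boundary_dist k u x)", OF step this]
    show "k \<le> d" by (simp add: dist_uv boundary_dist_self)
  qed
  also have "\<dots> \<le> Hecc n k u" unfolding Hecc_def using v by (rule SUP_upper)
  finally show ?thesis .
qed

lemma Hadj_first_letter_leaves_zero_at_root:
  assumes "Hadj n k x y" and "x ! 0 = 0" and "y ! 0 \<noteq> 0"
  shows "x = replicate k 0"
proof -
  have len: "length x = k" "length y = k" using assms unfolding Hadj_def by (auto simp: Hverts_length)
  show ?thesis
  proof (cases "k \<le> 1")
    case True
    with len assms(2) show ?thesis by (cases x) (auto simp: Suc_le_eq)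
  next
    case False
    consider "R1 k x y" | "R2 k x y" | "R2 k y x" | "R3 k x y" using assms unfolding Hadj_def by blast
    then show ?thesis
    proof cases
      case 1
      then have "take (k - 1) x ! 0 = take (k - 1) y ! 0" unfolding R1_def by simp
      with False assms show ?thesis by simp
    next
      case 2
      then obtain i where i: "x = take i y @ replicate (k - i) 0" unfolding R2_def by blast
      have "i = 0 \<or> x ! 0 = y ! 0" using i len False by (auto simp: nth_append)
      with i assms show ?thesis by auto
    next
      case 3
      then obtain i where "y = take i x @ replicate (k - i) 0" unfolding R2_def by blast
      then have "y ! 0 = 0 \<or> y ! 0 = x ! 0" using len False by (cases "i = 0") (auto simp: nth_append)
      with assms show ?thesis by simp
    next
      case 4
      then obtain i p a b where "a \<noteq> 0"
        "x = p @ [a] @ replicate (k - i) 0" "y = p @ [b] @ replicate (k - i) 0"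
        unfolding R3_def by blast
      then have "x ! 0 \<noteq> 0 \<or> x ! 0 = y ! 0" by (cases p) auto
      with assms show ?thesis by simp
    qed
  qed
qed

definition signed_boundaries :: "nat \<Rightarrow> nat list \<Rightarrow> int" where
  "signed_boundaries k x =
     (if x ! 0 = 0 then - int (boundary_dist k (replicate k 0) x)
      else int (boundary_dist k (replicate k 0) x))"

lemma signed_boundaries_Hadj:
  assumes "Hadj n k x y"
  shows "signed_boundaries k y \<le> signed_boundaries k x + 1"
proof -
  let ?b = "boundary_dist k (replicate k 0)"
  have up: "?b y \<le> ?b x + 1" using boundary_dist_Hadj[OF assms] .
  have down: "?b x \<le> ?b y + 1" using boundary_dist_Hadj[OF sympD[OF symp_Hadj assms]] .
  show ?thesis
  proof (cases "x ! 0 = 0 \<and> y ! 0 \<noteq> 0")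
    case True
    then have "?b x = 0"
      using Hadj_first_letter_leaves_zero_at_root[OF assms] boundary_dist_self by auto
    with up True show ?thesis unfolding signed_boundaries_def by simp
  next
    case False
    with up down show ?thesis unfolding signed_boundaries_def by auto
  qed
qed

lemma Hdiam_ge:
  assumes "n \<ge> 2" and "k \<ge> 1"
  shows "enat (2 * k - 1) \<le> Hdiam n k"
proof -
  define u where "u = map (\<lambda>i. if even i then 0 else (1::nat)) [0..<k]"
  define v where "v = map (\<lambda>i. if even i then 1 else (0::nat)) [0..<k]"
  have u: "u \<in> Hverts n k" and v: "v \<in> Hverts n k"
    using assms unfolding u_def v_def Hverts_def by auto
  have "{i. i < k \<and> zero_boundary (replicate k 0) i \<noteq> zero_boundary u i} = {1..<k}"
    unfolding zero_boundary_def u_def by (auto split: if_splits)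
  then have "boundary_dist k (replicate k 0) u = k - 1" unfolding boundary_dist_def by simp
  moreover have "{i. i < k \<and> zero_boundary (replicate k 0) i \<noteq> zero_boundary v i} = {..<k}"
    unfolding zero_boundary_def v_def by (auto split: if_splits)
  then have "boundary_dist k (replicate k 0) v = k" unfolding boundary_dist_def by simp
  moreover have "u ! 0 = 0" "v ! 0 = 1" using assms unfolding u_def v_def by auto
  ultimately have su: "signed_boundaries k u = - int (k - 1)" and sv: "signed_boundaries k v = int k"
    unfolding signed_boundaries_def by auto
  have "enat (2 * k - 1) \<le> Hdist n k u v"
  proof (rule Hdist_ge_if_walks_long)
    fix d assume "(Hadj n k ^^ d) u v"
    with relpowp_increment_bound[of "Hadj n k" "signed_boundaries k"] signed_boundaries_Hadj
    have "signed_boundaries k v \<le> signed_boundaries k u + int d" by blast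
    with su sv assms show "2 * k - 1 \<le> d" by linarith
  qed
  also have "\<dots> \<le> Hecc n k u" unfolding Hecc_def using v by (rule SUP_upper)
  also have "\<dots> \<le> Hdiam n k" unfolding Hdiam_def using u by (rule SUP_upper)
  finally show ?thesis .
qed

theorem mainTheorem4:
  fixes n k :: nat
  assumes "n \<ge> 2" and "k \<ge> 1"
  shows "Hecc n k (Hroot k) = enat k \<and> Hradius n k = enat k
         \<and> Hdiam n k = enat (2 * k - 1)"
proof -
  have root: "Hroot k \<in> Hverts n k" unfolding Hroot_def using assms by (intro replicate_in_Hverts) simp
  have "Hecc n k (Hroot k) \<le> enat k" unfolding Hecc_def Hroot_def
    using walk_within_from_root[OF assms] Hdist_le_if_walk_within by (blast intro: SUP_least)
  with Hecc_ge[OF assms(1) root] have ecc: "Hecc n k (Hroot k) = enat k" by simp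
  moreover have "Hradius n k = enat k"
  proof (rule antisym)
    show "Hradius n k \<le> enat k" unfolding Hradius_def using root ecc by (metis INF_lower)
    show "enat k \<le> Hradius n k" unfolding Hradius_def using Hecc_ge[OF assms(1)] by (rule INF_greatest)
  qed
  moreover have "Hdiam n k \<le> enat (2 * k - 1)" unfolding Hdiam_def Hecc_def
    using walk_within_diameter[OF assms] Hdist_le_if_walk_within by (blast intro: SUP_least)
  ultimately show ?thesis using Hdiam_ge[OF assms] by simp
qed

end
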